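(* Let $\boldsymbol{A}$ be the adjacency matrix of an undirected graph without self-loops on a finite vertex set $\boldsymbol{V}=\{1,\dots,N\}$. Let $\mathcal{R}_e\subset\boldsymbol{V}$ be a nonempty set of egos and $\mathcal{R}_a\subset\boldsymbol{V}\setminus\mathcal{R}_e$ a nonempty set of alters, $n_a=|\mathcal{R}_a|$, where each alter $j\in\mathcal{R}_a$ has a unique recruiting ego $e(j)\in\mathcal{R}_e$ with $A_{j\,e(j)}=1$. Let $\widetilde{\boldsymbol{A}}$ be the observed adjacency matrix, with $\widetilde A_{ij}=\widetilde A_{ji}=1$ if and only if $i\in\mathcal{R}_a$ and $j=e(i)$ (all other entries $0$). Let $\boldsymbol{Z}\in\{0,1\}^N$ have independent components with $\Pr(Z_i=1)=p_z\,\mathbb{I}\{i\in\mathcal{R}_e\}$ for a known $p_z\in(0,1)$. Define $F_i=\mathbb{I}\{\sum_{j\neq i}Z_jA_{ij}>0\}$ and $\widetilde F_i=\mathbb{I}\{\sum_{j\neq i}Z_j\widetilde A_{ij}>0\}$. Each unit $i\in\mathcal{R}_e\cup\mathcal{R}_a$ has fixed real potential outcomes $Y_i(z,f)$, $z,f\in\{0,1\}$, and observed outcome $Y_i=\sum_{z,f\in\{0,1\}}Y_i(z,f)\mathbb{I}\{Z_i=z,F_i=f\}$. For $i\in\mathcal{R}_a$ let $\pi_i^a=\Pr(F_i=1)$ (over $\boldsymbol{Z}$), and assume $\pi_i^a<1$ for all $i\in\mathcal{R}_a$. Define $$IE=\frac1{n_a}\sum_{i\in\mathcal{R}_a}[Y_i(0,1)-Y_i(0,0)],\qquad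 \widehat{IE}_{adj}=\frac1{n_a}\sum_{i\in\mathcal{R}_a}\frac{1-p_z}{1-\pi_i^a}\Big[\frac{\mathbb{I}\{\widetilde F_i=1\}Y_i}{p_z}-\frac{\mathbb{I}\{\widetilde F_i=0\}Y_i}{1-p_z}\Big].$$ Then $\mathbb{E}_{\boldsymbol{Z}}[\widehat{IE}_{adj}]=IE$.
   Context: Design-based setting: the network, the sample, the recruitment map and the potential outcomes are fixed; the only randomness is the treatment assignment $\boldsymbol{Z}$, and expectations are over $\boldsymbol{Z}$. *)

theory Defs
  imports "HOL-Probability.Probability"
begin

definition Zpmf :: "nat \<Rightarrow> nat set \<Rightarrow> real \<Rightarrow> (nat \<Rightarrow> bool) pmf" where
  "Zpmf N Eg p = Pi_pmf {1..N} False (\<lambda>i. bernoulli_pmf (if i \<in> Eg then p else 0))"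

definition expo :: "nat \<Rightarrow> (nat \<Rightarrow> nat \<Rightarrow> real) \<Rightarrow> (nat \<Rightarrow> bool) \<Rightarrow> nat \<Rightarrow> bool" where
  "expo N A Z i = ((\<Sum>j\<in>{1..N} - {i}. of_bool (Z j) * A i j) > 0)"

definition Aobs :: "nat set \<Rightarrow> (nat \<Rightarrow> nat) \<Rightarrow> nat \<Rightarrow> nat \<Rightarrow> real" where
  "Aobs Al e i j = (if (i \<in> Al \<and> j = e i) \<or> (j \<in> Al \<and> i = e j) then 1 else 0)"

definition Yobs :: "nat \<Rightarrow> (nat \<Rightarrow> nat \<Rightarrow> real) \<Rightarrow> (nat \<Rightarrow> bool \<Rightarrow> bool \<Rightarrow> real)
    \<Rightarrow> (nat \<Rightarrow> bool) \<Rightarrow> nat \<Rightarrow> real" where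
  "Yobs N A Y Z i = (\<Sum>z\<in>{False, True}. \<Sum>f\<in>{False, True}.
      Y i z f * of_bool (Z i = z \<and> expo N A Z i = f))"

definition pi_a :: "nat \<Rightarrow> (nat \<Rightarrow> nat \<Rightarrow> real) \<Rightarrow> nat set \<Rightarrow> real \<Rightarrow> nat \<Rightarrow> real" where
  "pi_a N A Eg p i = measure_pmf.prob (Zpmf N Eg p) {Z. expo N A Z i}"

definition IE :: "nat set \<Rightarrow> (nat \<Rightarrow> bool \<Rightarrow> bool \<Rightarrow> real) \<Rightarrow> real" where
  "IE Al Y = (1 / real (card Al)) * (\<Sum>i\<in>Al. Y i False True - Y i False False)"

definition IE_adj :: "nat \<Rightarrow> (nat \<Rightarrow> nat \<Rightarrow> real) \<Rightarrow> nat set \<Rightarrow> nat set \<Rightarrow> (nat \<Rightarrow> nat)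
    \<Rightarrow> real \<Rightarrow> (nat \<Rightarrow> bool \<Rightarrow> bool \<Rightarrow> real) \<Rightarrow> (nat \<Rightarrow> bool) \<Rightarrow> real" where
  "IE_adj N A Eg Al e p Y Z = (1 / real (card Al)) * (\<Sum>i\<in>Al.
      (1 - p) / (1 - pi_a N A Eg p i) *
      (of_bool (expo N (Aobs Al e) Z i) * Yobs N A Y Z i / p
       - of_bool (\<not> expo N (Aobs Al e) Z i) * Yobs N A Y Z i / (1 - p)))"

end

theory Submission
  imports Defs
begin

text \<open>An alter i is never treated, so its observed outcome is Y_i(0, F_i), and its observed
  exposure is exactly the treatment Z_e(i) of its recruiter. A treated recruiter also exposes i
  in the true network, so {Z_e(i) = 1} \<subseteq> {F_i = 1}. For nested events of this kind the
  inverse-probability-weighted contrast of Y_i(0, F_i) between {Z_e(i) = 1} and {Z_e(i) = 0} has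
  expectation (1 - Pr(F_i = 1)) / (1 - p_z) times Y_i(0,1) - Y_i(0,0), and the weight
  (1 - p_z) / (1 - \<pi>_i^a) cancels this factor.\<close>

lemma integrable_of_bool [simp]:
  "integrable (measure_pmf M) (\<lambda>\<omega>. of_bool (P \<omega>) :: real)"
  by (rule measure_pmf.integrable_const_bound[where B=1]) auto

lemma expectation_of_bool:
  "measure_pmf.expectation M (\<lambda>\<omega>. of_bool (P \<omega>) :: real) = measure_pmf.prob M {\<omega>. P \<omega>}"
proof -
  have "(\<lambda>\<omega>. of_bool (P \<omega>) :: real) = indicator {\<omega>. P \<omega>}"
    by (auto simp: indicator_def)
  then show ?thesis by simp
qed

lemma expectation_ipw_contrast:
  fixes M :: "'a pmf" and X F :: "'a \<Rightarrow> bool" and y :: "bool \<Rightarrow> real"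
  assumes X_imp_F: "AE \<omega> in M. X \<omega> \<longrightarrow> F \<omega>"
    and prob_X: "measure_pmf.prob M {\<omega>. X \<omega>} = p" and p: "0 < p" "p < 1"
  shows "measure_pmf.expectation M
           (\<lambda>\<omega>. of_bool (X \<omega>) * y (F \<omega>) / p - of_bool (\<not> X \<omega>) * y (F \<omega>) / (1 - p))
         = (1 - measure_pmf.prob M {\<omega>. F \<omega>}) / (1 - p) * (y True - y False)"
proof -
  let ?\<pi> = "measure_pmf.prob M {\<omega>. F \<omega>}"
  have "AE \<omega> in M. of_bool (X \<omega>) * y (F \<omega>) / p - of_bool (\<not> X \<omega>) * y (F \<omega>) / (1 - p)
      = of_bool (X \<omega>) * (y True / p + y True / (1 - p))
        - (y False + of_bool (F \<omega>) * (y True - y False)) / (1 - p)"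
    using X_imp_F by eventually_elim (auto simp: field_simps)
  then have "measure_pmf.expectation M
           (\<lambda>\<omega>. of_bool (X \<omega>) * y (F \<omega>) / p - of_bool (\<not> X \<omega>) * y (F \<omega>) / (1 - p))
      = measure_pmf.expectation M (\<lambda>\<omega>. of_bool (X \<omega>) * (y True / p + y True / (1 - p))
        - (y False + of_bool (F \<omega>) * (y True - y False)) / (1 - p))"
    by (intro integral_cong_AE) simp_all
  also have "\<dots> = p * (y True / p + y True / (1 - p)) - (y False + ?\<pi> * (y True - y False)) / (1 - p)"
    using prob_X by (simp add: expectation_of_bool)
  also have "\<dots> = (1 - ?\<pi>) / (1 - p) * (y True - y False)"
    using p by (simp add: divide_simps) (simp add: algebra_simps)
  finally show ?thesis .
qed

lemma set_pmf_Zpmf: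
  "set_pmf (Zpmf N Eg p)
     = PiE_dflt {1..N} False (set_pmf \<circ> (\<lambda>i. bernoulli_pmf (if i \<in> Eg then p else 0)))"
  unfolding Zpmf_def by (rule set_Pi_pmf) simp

lemma finite_set_pmf_Zpmf: "finite (set_pmf (Zpmf N Eg p))"
  unfolding set_pmf_Zpmf by (rule finite_PiE_dflt) auto

lemma Zpmf_untreated:
  assumes Z: "Z \<in> set_pmf (Zpmf N Eg p)" and j: "j \<notin> Eg"
  shows "\<not> Z j"
proof (cases "j \<in> {1..N}")
  case True
  then have "Z j \<in> set_pmf (bernoulli_pmf 0)"
    using Z j unfolding set_pmf_Zpmf PiE_dflt_def by auto
  then show ?thesis by (auto simp: set_pmf_iff)
next
  case False
  then show ?thesis using Z unfolding set_pmf_Zpmf PiE_dflt_def by auto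
qed

lemma prob_Zpmf_treated:
  assumes "k \<in> Eg" "k \<in> {1..N}" "0 \<le> p" "p \<le> 1"
  shows "measure_pmf.prob (Zpmf N Eg p) {Z. Z k} = p"
proof -
  have "measure_pmf.prob (Zpmf N Eg p) {Z. Z k} = measure_pmf.prob (map_pmf (\<lambda>Z. Z k) (Zpmf N Eg p)) {True}"
    by (simp add: measure_map_pmf vimage_def)
  also have "map_pmf (\<lambda>Z. Z k) (Zpmf N Eg p) = bernoulli_pmf p"
    unfolding Zpmf_def using assms by (subst Pi_pmf_component) auto
  finally show ?thesis using assms by (simp add: measure_pmf_single)
qed

lemma expo_Aobs_alter:
  assumes "i \<in> Al" "e i \<in> {1..N}" "\<forall>j\<in>Al. e j \<notin> Al"
  shows "expo N (Aobs Al e) Z i = Z (e i)"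
proof -
  have "(\<Sum>j\<in>{1..N} - {i}. of_bool (Z j) * Aobs Al e i j)
      = (\<Sum>j\<in>{1..N} - {i}. if j = e i then of_bool (Z (e i)) else 0)"
    using assms by (intro sum.cong) (auto simp: Aobs_def)
  also have "\<dots> = of_bool (Z (e i))"
    using assms by auto
  finally show ?thesis unfolding expo_def by simp
qed

lemma expo_if_treated_neighbour:
  assumes "\<forall>j\<in>{1..N}. 0 \<le> A i j" "k \<in> {1..N}" "k \<noteq> i" "0 < A i k" "Z k"
  shows "expo N A Z i"
proof -
  have "0 < of_bool (Z k) * A i k" using assms by simp
  also have "\<dots> \<le> (\<Sum>j\<in>{1..N} - {i}. of_bool (Z j) * A i j)"
    using assms by (intro member_le_sum) auto
  finally show ?thesis unfolding expo_def .
qed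

lemma Yobs_untreated: "\<not> Z i \<Longrightarrow> Yobs N A Y Z i = Y i False (expo N A Z i)"
  unfolding Yobs_def by (cases "expo N A Z i") auto

definition IE_adj_summand :: "nat \<Rightarrow> (nat \<Rightarrow> nat \<Rightarrow> real) \<Rightarrow> nat set \<Rightarrow> nat set
    \<Rightarrow> (nat \<Rightarrow> nat) \<Rightarrow> real \<Rightarrow> (nat \<Rightarrow> bool \<Rightarrow> bool \<Rightarrow> real) \<Rightarrow> (nat \<Rightarrow> bool) \<Rightarrow> nat \<Rightarrow> real" where
  "IE_adj_summand N A Eg Al e p Y Z i = (1 - p) / (1 - pi_a N A Eg p i) *
      (of_bool (expo N (Aobs Al e) Z i) * Yobs N A Y Z i / p
       - of_bool (\<not> expo N (Aobs Al e) Z i) * Yobs N A Y Z i / (1 - p))"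

lemma IE_adj_eq_sum_summands:
  "IE_adj N A Eg Al e p Y Z = 1 / real (card Al) * (\<Sum>i\<in>Al. IE_adj_summand N A Eg Al e p Y Z i)"
  unfolding IE_adj_def IE_adj_summand_def ..

lemma expectation_IE_adj_summand:
  assumes A_nonneg: "\<forall>j\<in>{1..N}. 0 \<le> A i j"
    and i: "i \<in> Al" and Eg: "Eg \<subseteq> {1..N}" and Al: "Al \<inter> Eg = {}"
    and rec: "\<forall>j\<in>Al. e j \<in> Eg" "A i (e i) = 1"
    and p: "0 < p" "p < 1" and pi_lt1: "pi_a N A Eg p i < 1"
  shows "measure_pmf.expectation (Zpmf N Eg p) (\<lambda>Z. IE_adj_summand N A Eg Al e p Y Z i)
    = Y i False True - Y i False False"
proof -
  let ?M = "Zpmf N Eg p" and ?c = "(1 - p) / (1 - pi_a N A Eg p i)"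
  let ?X = "\<lambda>Z. Z (e i)" and ?F = "\<lambda>Z. expo N A Z i"
  let ?ipw = "\<lambda>Z. of_bool (?X Z) * Y i False (?F Z) / p - of_bool (\<not> ?X Z) * Y i False (?F Z) / (1 - p)"
  have i_untreated: "i \<notin> Eg"
    using i Al by auto
  have ei: "e i \<in> Eg" "e i \<in> {1..N}" "e i \<noteq> i" "\<forall>j\<in>Al. e j \<notin> Al"
    using rec i i_untreated Eg Al by auto
  have "AE Z in ?M. IE_adj_summand N A Eg Al e p Y Z i = ?c * ?ipw Z"
    using i i_untreated ei unfolding IE_adj_summand_def
    by (intro AE_pmfI) (simp add: expo_Aobs_alter Yobs_untreated Zpmf_untreated)
  then have "measure_pmf.expectation ?M (\<lambda>Z. IE_adj_summand N A Eg Al e p Y Z i)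
      = measure_pmf.expectation ?M (\<lambda>Z. ?c * ?ipw Z)"
    by (intro integral_cong_AE) simp_all
  also have "\<dots> = ?c * measure_pmf.expectation ?M ?ipw"
    by (rule integral_mult_right_zero)
  also have "\<dots> = ?c * ((1 - pi_a N A Eg p i) / (1 - p) * (Y i False True - Y i False False))"
  proof -
    have treated_exposes: "AE Z in ?M. ?X Z \<longrightarrow> ?F Z"
      using rec by (intro AE_pmfI impI expo_if_treated_neighbour[of N A i "e i", OF A_nonneg ei(2,3)]) simp_all
    have prob_treated: "measure_pmf.prob ?M {Z. ?X Z} = p"
      using ei p by (simp add: prob_Zpmf_treated)
    show ?thesis
      unfolding pi_a_def by (simp only: expectation_ipw_contrast[OF treated_exposes prob_treated p])
  qed
  also have "\<dots> = Y i False True - Y i False False"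
    using p pi_lt1 by simp
  finally show ?thesis .
qed

theorem proposition2:
  fixes N :: nat and A :: "nat \<Rightarrow> nat \<Rightarrow> real" and Eg Al :: "nat set"
    and e :: "nat \<Rightarrow> nat" and p :: real and Y :: "nat \<Rightarrow> bool \<Rightarrow> bool \<Rightarrow> real"
  assumes A01: "\<forall>i\<in>{1..N}. \<forall>j\<in>{1..N}. A i j \<in> {0, 1}"
    and Asym: "\<forall>i\<in>{1..N}. \<forall>j\<in>{1..N}. A i j = A j i"
    and Anoloop: "\<forall>i\<in>{1..N}. A i i = 0"
    and Eg: "Eg \<subseteq> {1..N}" "Eg \<noteq> {}"
    and Al: "Al \<subseteq> {1..N} - Eg" "Al \<noteq> {}"
    and rec: "\<forall>j\<in>Al. e j \<in> Eg \<and> A j (e j) = 1"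
    and p: "0 < p" "p < 1"
    and pi_lt1: "\<forall>i\<in>Al. pi_a N A Eg p i < 1"
  shows "measure_pmf.expectation (Zpmf N Eg p) (IE_adj N A Eg Al e p Y) = IE Al Y"
proof -
  have summand: "measure_pmf.expectation (Zpmf N Eg p) (\<lambda>Z. IE_adj_summand N A Eg Al e p Y Z i)
      = Y i False True - Y i False False" if "i \<in> Al" for i
  proof -
    have A_nonneg: "\<forall>j\<in>{1..N}. 0 \<le> A i j"
      using A01 Al(1) that by fastforce
    have disjoint: "Al \<inter> Eg = {}" and recruited: "\<forall>j\<in>Al. e j \<in> Eg" "A i (e i) = 1"
      using Al(1) rec that by auto
    show ?thesis
      using expectation_IE_adj_summand[of N A i, OF A_nonneg that Eg(1) disjoint recruited p] pi_lt1 that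
      by simp
  qed
  have "\<And>f. integrable (measure_pmf (Zpmf N Eg p)) (f :: _ \<Rightarrow> real)"
    by (rule integrable_measure_pmf_finite[OF finite_set_pmf_Zpmf])
  then have "measure_pmf.expectation (Zpmf N Eg p) (IE_adj N A Eg Al e p Y)
    = 1 / real (card Al) * (\<Sum>i\<in>Al. measure_pmf.expectation (Zpmf N Eg p)
        (\<lambda>Z. IE_adj_summand N A Eg Al e p Y Z i))"
    unfolding IE_adj_eq_sum_summands by (simp add: Bochner_Integration.integral_sum)
  also have "\<dots> = IE Al Y"
    unfolding IE_def by (simp only: sum.cong[OF refl summand])
  finally show ?thesis .
qed

end
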